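(* Let $d\ge 2$ be an integer, let $C:=-2.15$ and let $g:\mathbb{R}\to\mathbb{R}$ be $$g(z):=\exp\big(z^3+(-2-3C)z^2+(3C^2+4C)z+\ln 2\big)-1 .$$ For $W=[w_1,\ldots,w_d]$ with $w_1,\ldots,w_d\in\mathbb{R}^d$, define $f(\cdot;W):\mathbb{R}^d\to\mathbb{R}^d$ by $f(x;W):=[g(\langle w_1,x\rangle),\ldots,g(\langle w_d,x\rangle)]^\top$. Then there exists such a $W$ for which $f(\cdot;W)$ has two distinct fixed points $p_1,p_2\in\mathbb{R}^d$ such that for each $i\in\{1,2\}$ there exist constants $\epsilon_i>0$, $c_i>0$ and $K_i\in[0,1)$ with the following property: for every initial point $x^{(0)}\in[p_{i,1}-\epsilon_i,p_{i,1}+\epsilon_i]\times\{1\}^{d-1}$, the fixed-point iteration $x^{(t)}=f(x^{(t-1)};W)$ ($t\ge1$) converges to $p_i$, and for every $t\ge2$, $$\|x^{(t)}-p_i\|_\infty\le K_i^t\cdot c_i\epsilon_i .$$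
   Context: $p_{i,1}$ denotes the first coordinate of $p_i$; $\|\cdot\|_\infty$ is the $\ell_\infty$ norm. A fixed point of $F$ is a point $p$ with $F(p)=p$. *)

theory Defs
  imports "HOL-Analysis.Analysis"
begin

text \<open>Vectors in R^d are represented as functions nat => real, indices 0..d-1
  (index 0 = first coordinate), with all entries at indices >= d equal to 0.
  The matrix W = [w_1,...,w_d] is represented by W :: nat => nat => real,
  where W i is the vector w_(i+1), i.e. W i j is its (j+1)-th coordinate.\<close>

definition Cconst :: real where "Cconst = -2.15"

definition g :: "real \<Rightarrow> real" where
  "g z = exp (z^3 + (-2 - 3*Cconst) * z^2 + (3*Cconst^2 + 4*Cconst) * z + ln 2) - 1"

definition rvec :: "nat \<Rightarrow> (nat \<Rightarrow> real) set" where
  "rvec d = {x. \<forall>i\<ge>d. x i = 0}"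

definition inner_d :: "nat \<Rightarrow> (nat \<Rightarrow> real) \<Rightarrow> (nat \<Rightarrow> real) \<Rightarrow> real" where
  "inner_d d u v = (\<Sum>j<d. u j * v j)"

definition fW :: "nat \<Rightarrow> (nat \<Rightarrow> nat \<Rightarrow> real) \<Rightarrow> (nat \<Rightarrow> real) \<Rightarrow> (nat \<Rightarrow> real)" where
  "fW d W x = (\<lambda>i. if i < d then g (inner_d d (W i) x) else 0)"

definition supnorm_d :: "nat \<Rightarrow> (nat \<Rightarrow> real) \<Rightarrow> real" where
  "supnorm_d d x = Max ((\<lambda>i. \<bar>x i\<bar>) ` {..<d})"

end

(* Take w_1 = (-48/25, C, 0, ..., 0) and w_2 = ... = w_d = 0. Since g 0 = 1, the map f sends
   (s, 1, ..., 1) to (h s, 1, ..., 1) with h s = g (C - 48/25 s), so the dynamics on these vectors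
   is that of the one-dimensional map h. Elementary bounds on exp and ln 2 show, by the
   intermediate value theorem, that h has a fixed point in [-1/20, 1/100] and one in
   [-3/4, -13/20], and bound |h'| by 9/10 resp. 3/5 on neighbourhoods of these intervals.
   Hence h is a contraction near each fixed point, and its iterates converge geometrically,
   with K the Lipschitz constant and c = 1. *)

theory Submission
  imports Defs
begin

lemma lipschitz_on_field_deriv_bound:
  fixes f :: "'a::real_normed_field \<Rightarrow> 'a"
  assumes "convex S"
    and "\<And>z. z \<in> S \<Longrightarrow> (f has_field_derivative f' z) (at z)"
    and "\<And>z. z \<in> S \<Longrightarrow> norm (f' z) \<le> B"
    and "0 \<le> B"
  shows "B-lipschitz_on S f"
  using field_differentiable_bound[OF assms(1) has_field_derivative_at_within[OF assms(2)] assms(3)]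
    assms(4)
  by (auto intro!: lipschitz_onI simp: dist_norm)

lemma lipschitz_on_fixpoint_funpow_dist:
  fixes f :: "'a::metric_space \<Rightarrow> 'a"
  assumes lip: "L-lipschitz_on (cball p e) f" and "f p = p" "L \<le> 1" and x: "x \<in> cball p e"
  shows "dist ((f ^^ n) x) p \<le> L ^ n * dist x p"
proof (induction n)
  case 0
  then show ?case by simp
next
  case (Suc n)
  have "0 \<le> L" using lip lipschitz_on_nonneg by blast
  have "L ^ n * dist x p \<le> dist x p"
    using \<open>0 \<le> L\<close> \<open>L \<le> 1\<close> by (simp add: mult_left_le_one_le power_le_one)
  with Suc x have "(f ^^ n) x \<in> cball p e" by (simp add: dist_commute)
  then have "dist (f ((f ^^ n) x)) (f p) \<le> L * dist ((f ^^ n) x) p"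
    using x by (intro lipschitz_onD[OF lip]) (auto intro: order_trans[OF zero_le_dist])
  also have "\<dots> \<le> L * (L ^ n * dist x p)"
    using Suc \<open>0 \<le> L\<close> by (intro mult_left_mono)
  finally show ?case using \<open>f p = p\<close> by simp
qed

definition pad_ones :: "nat \<Rightarrow> real \<Rightarrow> nat \<Rightarrow> real" where
  "pad_ones d s = (\<lambda>i. if i = 0 then s else if i < d then 1 else 0)"

definition first_row_matrix :: "real \<Rightarrow> real \<Rightarrow> nat \<Rightarrow> nat \<Rightarrow> real" where
  "first_row_matrix a b = (\<lambda>i j. if i = 0 \<and> j = 0 then a else if i = 0 \<and> j = 1 then b else 0)"

definition locally_attracting :: "nat \<Rightarrow> (nat \<Rightarrow> nat \<Rightarrow> real) \<Rightarrow> (nat \<Rightarrow> real) \<Rightarrow> bool" where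
  "locally_attracting d W p \<longleftrightarrow> (\<exists>\<epsilon> c K. \<epsilon> > 0 \<and> c > 0 \<and> 0 \<le> K \<and> K < 1 \<and>
     (\<forall>x0 \<in> rvec d. x0 0 \<in> {p 0 - \<epsilon> .. p 0 + \<epsilon>} \<and> (\<forall>j. 1 \<le> j \<and> j < d \<longrightarrow> x0 j = 1) \<longrightarrow>
        ((\<lambda>t. supnorm_d d ((fW d W ^^ t) x0 - p)) \<longlonglongrightarrow> 0) \<and>
        (\<forall>t\<ge>2. supnorm_d d ((fW d W ^^ t) x0 - p) \<le> K ^ t * c * \<epsilon>)))"

lemma pad_ones_in_rvec: "1 \<le> d \<Longrightarrow> pad_ones d s \<in> rvec d"
  by (simp add: rvec_def pad_ones_def)

lemma first_row_matrix_in_rvec: "2 \<le> d \<Longrightarrow> first_row_matrix a b i \<in> rvec d"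
  by (simp add: rvec_def first_row_matrix_def)

lemma pad_ones_inject: "pad_ones d s = pad_ones d s' \<longleftrightarrow> s = s'"
  by (metis pad_ones_def)

lemma rvec_eq_pad_ones:
  assumes "x \<in> rvec d" "\<And>j. 1 \<le> j \<Longrightarrow> j < d \<Longrightarrow> x j = 1"
  shows "x = pad_ones d (x 0)"
  using assms by (auto simp: fun_eq_iff pad_ones_def rvec_def)

lemma g_zero: "g 0 = 1"
  by (simp add: g_def)

lemma inner_first_row_pad_ones:
  assumes "2 \<le> d"
  shows "inner_d d (first_row_matrix a b 0) (pad_ones d s) = a * s + b"
proof -
  have "inner_d d (first_row_matrix a b 0) (pad_ones d s)
      = (\<Sum>j\<in>{0, 1}. first_row_matrix a b 0 j * pad_ones d s j)"
    unfolding inner_d_def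
    by (rule sum.mono_neutral_right) (use assms in \<open>auto simp: first_row_matrix_def\<close>)
  then show ?thesis
    using assms by (simp add: first_row_matrix_def pad_ones_def)
qed

lemma fW_first_row_pad_ones:
  assumes "2 \<le> d"
  shows "fW d (first_row_matrix a b) (pad_ones d s) = pad_ones d (g (a * s + b))"
proof
  fix i
  show "fW d (first_row_matrix a b) (pad_ones d s) i = pad_ones d (g (a * s + b)) i"
  proof (cases "i = 0")
    case True
    then show ?thesis
      using assms by (simp add: fW_def inner_first_row_pad_ones) (simp add: pad_ones_def)
  next
    case False
    then have "first_row_matrix a b i = (\<lambda>j. 0)"
      by (simp add: first_row_matrix_def)
    with False show ?thesis
      by (simp add: fW_def pad_ones_def inner_d_def g_zero)
  qed
qed

lemma funpow_fW_first_row_pad_ones: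
  assumes "2 \<le> d"
  shows "(fW d (first_row_matrix a b) ^^ t) (pad_ones d s)
       = pad_ones d (((\<lambda>s. g (a * s + b)) ^^ t) s)"
  by (induction t) (simp_all add: fW_first_row_pad_ones[OF assms])

lemma supnorm_d_pad_ones_diff:
  assumes "1 \<le> d"
  shows "supnorm_d d (pad_ones d s - pad_ones d s') = \<bar>s - s'\<bar>"
  unfolding supnorm_d_def
proof (rule Max_eqI)
  show "\<bar>s - s'\<bar> \<in> (\<lambda>i. \<bar>(pad_ones d s - pad_ones d s') i\<bar>) ` {..<d}"
    by (rule image_eqI[of _ _ 0]) (use assms in \<open>auto simp: pad_ones_def\<close>)
qed (auto simp: pad_ones_def)

lemma locally_attracting_pad_ones:
  assumes d: "2 \<le> d" and fixpt: "g (a * q + b) = q" and "0 < e" "L < 1"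
    and lip: "L-lipschitz_on (cball q e) (\<lambda>s. g (a * s + b))"
  shows "locally_attracting d (first_row_matrix a b) (pad_ones d q)"
  unfolding locally_attracting_def
proof (rule exI[of _ e], rule exI[of _ 1], rule exI[of _ L], intro conjI ballI impI allI)
  fix x0 assume "x0 \<in> rvec d"
    and x0: "x0 0 \<in> {pad_ones d q 0 - e .. pad_ones d q 0 + e} \<and>
      (\<forall>j. 1 \<le> j \<and> j < d \<longrightarrow> x0 j = 1)"
  then have x0_eq: "x0 = pad_ones d (x0 0)"
    by (intro rvec_eq_pad_ones) auto
  have s: "x0 0 \<in> cball q e"
    using x0 by (simp add: pad_ones_def cball_eq_atLeastAtMost)
  let ?err = "\<lambda>t. supnorm_d d ((fW d (first_row_matrix a b) ^^ t) x0 - pad_ones d q)"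
  have err_eq: "?err t = dist (((\<lambda>s. g (a * s + b)) ^^ t) (x0 0)) q" for t
    using d by (subst x0_eq)
      (simp add: funpow_fW_first_row_pad_ones supnorm_d_pad_ones_diff dist_real_def)
  have "0 \<le> L"
    using lip lipschitz_on_nonneg by blast
  have err_le: "?err t \<le> L ^ t * e" for t
  proof -
    have "?err t \<le> L ^ t * dist (x0 0) q"
      unfolding err_eq using lip fixpt \<open>L < 1\<close> s by (intro lipschitz_on_fixpoint_funpow_dist) auto
    also have "\<dots> \<le> L ^ t * e"
      using s \<open>0 \<le> L\<close> by (intro mult_left_mono) (auto simp: dist_commute)
    finally show ?thesis .
  qed
  have "(\<lambda>t. L ^ t * e) \<longlonglongrightarrow> 0"
    using \<open>0 \<le> L\<close> \<open>L < 1\<close> by (intro tendsto_mult_left_zero LIMSEQ_power_zero) auto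
  then show "?err \<longlonglongrightarrow> 0"
    by (rule tendsto_sandwich[rotated 2, OF tendsto_const]) (use err_le err_eq in auto)
  show "?err t \<le> L ^ t * 1 * e" if "2 \<le> t" for t
    using err_le by simp
qed (use \<open>0 < e\<close> \<open>L < 1\<close> lip lipschitz_on_nonneg in auto)

(* Cconst^2 * (Cconst + 2) = -0.693375 nearly cancels ln 2, so g Cconst is close to 0. *)
definition shifted_exponent :: "real \<Rightarrow> real" where
  "shifted_exponent u = u^2 * (u - 2) + Cconst^2 * (Cconst + 2) + ln 2"

lemma g_Cconst_plus: "g (Cconst + u) = exp (shifted_exponent u) - 1"
proof -
  have "(Cconst + u)^3 + (-2 - 3*Cconst) * (Cconst + u)^2 + (3*Cconst^2 + 4*Cconst) * (Cconst + u)
      = u^2 * (u - 2) + Cconst^2 * (Cconst + 2)"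
    by algebra
  then show ?thesis
    by (simp add: g_def shifted_exponent_def)
qed

lemma shifted_exponent_bounds:
  "u^2 * (u - 2) - 3/100 \<le> shifted_exponent u"
  "shifted_exponent u \<le> u^2 * (u - 2) + 1/900"
  using ln2_ge_two_thirds ln2_le_25_over_36
  by (simp_all add: shifted_exponent_def Cconst_def power2_eq_square)

lemma exp_shifted_exponent_le:
  assumes "u \<le> 2"
  shows "exp (shifted_exponent u) \<le> 101/100"
proof -
  have "u^2 * (u - 2) \<le> 0"
    using assms by (simp add: mult_nonneg_nonpos)
  then have "exp (shifted_exponent u) \<le> exp (1/900)"
    using shifted_exponent_bounds(2)[of u] by simp
  also have "\<dots> \<le> 1 + 2 * (1/900)"
    by (rule real_exp_bound_lemma) auto
  finally show ?thesis by simp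
qed

definition reduced_map :: "real \<Rightarrow> real" where
  "reduced_map = (\<lambda>s. g (-48/25 * s + Cconst))"

lemma reduced_map_eq: "reduced_map s = exp (shifted_exponent (-48/25 * s)) - 1"
  using g_Cconst_plus[of "-48/25 * s"] by (simp add: reduced_map_def add.commute)

lemma shifted_exponent_has_real_derivative:
  "(shifted_exponent has_real_derivative u * (3 * u - 4)) (at u)"
  unfolding shifted_exponent_def[abs_def]
  by (auto intro!: derivative_eq_intros simp: algebra_simps power2_eq_square)

lemma reduced_map_has_real_derivative:
  assumes "u = -48/25 * s"
  shows "(reduced_map has_real_derivative -48/25 * exp (shifted_exponent u) * (u * (3 * u - 4))) (at s)"
proof -
  have "((\<lambda>s. shifted_exponent (-48/25 * s)) has_real_derivative u * (3 * u - 4) * (-48/25)) (at s)"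
    unfolding assms
    by (rule DERIV_chain2[OF shifted_exponent_has_real_derivative]) (auto intro!: derivative_eq_intros)
  then have "((\<lambda>s. exp (shifted_exponent (-48/25 * s)) - 1) has_real_derivative
      exp (shifted_exponent u) * (u * (3 * u - 4) * (-48/25))) (at s)"
    using assms by (auto intro!: derivative_eq_intros)
  moreover have "reduced_map = (\<lambda>s. exp (shifted_exponent (-48/25 * s)) - 1)"
    by (simp add: fun_eq_iff reduced_map_eq)
  ultimately show ?thesis
    by (simp add: algebra_simps)
qed

lemma continuous_on_reduced_map: "continuous_on S reduced_map"
  by (rule continuous_at_imp_continuous_on)
    (blast intro: DERIV_isCont reduced_map_has_real_derivative[OF refl])

lemma reduced_map_fixpoint_between:
  assumes "l \<le> r" "l \<le> reduced_map l" "reduced_map r \<le> r"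
  shows "\<exists>p \<in> {l..r}. reduced_map p = p"
proof -
  have "\<exists>p. l \<le> p \<and> p \<le> r \<and> p - reduced_map p = 0"
    by (rule IVT'[of "\<lambda>s. s - reduced_map s"])
       (use assms in \<open>auto intro!: continuous_intros continuous_on_reduced_map\<close>)
  then show ?thesis
    by (metis atLeastAtMost_iff eq_iff_diff_eq_0)
qed

lemma reduced_map_fixpoint_near_zero: "\<exists>p \<in> {-1/20..1/100}. reduced_map p = p"
proof (rule reduced_map_fixpoint_between)
  have "-1/20 \<le> shifted_exponent (12/125)"
    using shifted_exponent_bounds(1)[of "12/125"] by (simp add: power2_eq_square)
  also have "\<dots> \<le> exp (shifted_exponent (12/125)) - 1"
    using exp_ge_add_one_self[of "shifted_exponent (12/125)"] by linarith
  finally show "-1/20 \<le> reduced_map (-1/20)"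
    by (simp add: reduced_map_eq)
  show "reduced_map (1/100) \<le> 1/100"
    using exp_shifted_exponent_le[of "-12/625"] by (simp add: reduced_map_eq)
qed simp

lemma reduced_map_fixpoint_far: "\<exists>p \<in> {-3/4..-13/20}. reduced_map p = p"
proof (rule reduced_map_fixpoint_between)
  have "1/4 \<le> (1 + (-6/5) / real 8) ^ 8"
    by (simp add: power_divide)
  also have "\<dots> \<le> exp (-6/5)"
    by (rule exp_ge_one_plus_x_over_n_power_n) auto
  also have "\<dots> \<le> exp (shifted_exponent (36/25))"
    using shifted_exponent_bounds(1)[of "36/25"] by (simp add: power2_eq_square)
  finally show "-3/4 \<le> reduced_map (-3/4)"
    by (simp add: reduced_map_eq)
  have "29/10 \<le> (1 + (117/100) / real 8) ^ 8"
    by (simp add: power_divide)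
  also have "\<dots> \<le> exp (117/100)"
    by (rule exp_ge_one_plus_x_over_n_power_n) auto
  finally have "inverse (exp (117/100)) \<le> inverse (29/10 :: real)"
    by (intro le_imp_inverse_le) auto
  moreover have "exp (shifted_exponent (156/125)) \<le> exp (- (117/100))"
    using shifted_exponent_bounds(2)[of "156/125"] by (simp add: power2_eq_square)
  ultimately show "reduced_map (-13/20) \<le> -13/20"
    by (simp add: reduced_map_eq exp_minus)
qed simp

lemma reduced_map_lipschitz_on:
  assumes bounds: "\<And>u. u \<in> {-48/25 * r..-48/25 * l} \<Longrightarrow>
      exp (shifted_exponent u) \<le> E \<and> \<bar>u\<bar> \<le> A \<and> \<bar>3 * u - 4\<bar> \<le> B"
    and "48/25 * E * A * B \<le> L" "0 \<le> L"
  shows "L-lipschitz_on {l..r} reduced_map"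
proof (rule lipschitz_on_field_deriv_bound)
  fix s :: real
  let ?u = "-48/25 * s"
  show "(reduced_map has_field_derivative -48/25 * exp (shifted_exponent ?u) * (?u * (3 * ?u - 4))) (at s)"
    by (rule reduced_map_has_real_derivative) simp
  assume "s \<in> {l..r}"
  then have "exp (shifted_exponent ?u) \<le> E" "\<bar>?u\<bar> \<le> A" "\<bar>3 * ?u - 4\<bar> \<le> B"
    using bounds[of ?u] by auto
  then have "exp (shifted_exponent ?u) * (\<bar>?u\<bar> * \<bar>3 * ?u - 4\<bar>) \<le> E * (A * B)"
    by (intro mult_mono) (auto intro: order_trans[OF exp_ge_zero])
  then show "norm (-48/25 * exp (shifted_exponent ?u) * (?u * (3 * ?u - 4))) \<le> L"
    using assms(2) by (simp add: abs_mult)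
qed (use assms in auto)

lemma reduced_map_lipschitz_near_zero: "(9/10)-lipschitz_on {-11/200..3/200} reduced_map"
proof (rule reduced_map_lipschitz_on[where E = "101/100" and A = "66/625" and B = "41/10"])
  fix u :: real
  assume "u \<in> {-48/25 * (3/200)..-48/25 * (-11/200)}"
  then show "exp (shifted_exponent u) \<le> 101/100 \<and> \<bar>u\<bar> \<le> 66/625 \<and> \<bar>3 * u - 4\<bar> \<le> 41/10"
    using exp_shifted_exponent_le[of u] by auto
qed auto

lemma reduced_map_lipschitz_far: "(3/5)-lipschitz_on {-19/25..-16/25} reduced_map"
proof (rule reduced_map_lipschitz_on[where E = "1/2" and A = "146/100" and B = "38/100"])
  fix u :: real
  assume u: "u \<in> {-48/25 * (-16/25)..-48/25 * (-19/25)}"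
  have "(768/625)^2 \<le> u^2"
    using u by (intro power_mono) auto
  then have "3/2 * (27/50) \<le> u^2 * (2 - u)"
    using u by (intro mult_mono) (auto simp: power2_eq_square)
  then have "shifted_exponent u \<le> - ln 2"
    using shifted_exponent_bounds(2)[of u] ln2_le_25_over_36 by (simp add: algebra_simps)
  then have "exp (shifted_exponent u) \<le> 1/2"
    using exp_le_cancel_iff[of "shifted_exponent u" "- ln 2"] by (simp add: exp_minus)
  moreover have "\<bar>3 * u - 4\<bar> \<le> 38/100"
    using u unfolding abs_le_iff by auto
  ultimately show "exp (shifted_exponent u) \<le> 1/2 \<and> \<bar>u\<bar> \<le> 146/100 \<and> \<bar>3 * u - 4\<bar> \<le> 38/100"
    using u by auto
qed auto

theorem lemmaC7:
  fixes d :: nat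
  assumes "d \<ge> 2"
  shows "\<exists>W :: nat \<Rightarrow> nat \<Rightarrow> real.
           (\<forall>i. W i \<in> rvec d) \<and>
           (\<exists>p1 p2. p1 \<in> rvec d \<and> p2 \<in> rvec d \<and> p1 \<noteq> p2 \<and>
              fW d W p1 = p1 \<and> fW d W p2 = p2 \<and>
              (\<forall>p \<in> {p1, p2}. \<exists>\<epsilon> c K. \<epsilon> > 0 \<and> c > 0 \<and> 0 \<le> K \<and> K < 1 \<and>
                 (\<forall>x0 \<in> rvec d. x0 0 \<in> {p 0 - \<epsilon> .. p 0 + \<epsilon>} \<and> (\<forall>j. 1 \<le> j \<and> j < d \<longrightarrow> x0 j = 1) \<longrightarrow>
                    ((\<lambda>t. supnorm_d d ((fW d W ^^ t) x0 - p)) \<longlonglongrightarrow> 0) \<and>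
                    (\<forall>t\<ge>2. supnorm_d d ((fW d W ^^ t) x0 - p) \<le> K ^ t * c * \<epsilon>))))"
proof -
  let ?W = "first_row_matrix (-48/25) Cconst"
  obtain p1 where p1: "p1 \<in> {-1/20..1/100}" "reduced_map p1 = p1"
    using reduced_map_fixpoint_near_zero by blast
  obtain p2 where p2: "p2 \<in> {-3/4..-13/20}" "reduced_map p2 = p2"
    using reduced_map_fixpoint_far by blast
  have "(9/10)-lipschitz_on (cball p1 (1/200)) reduced_map"
    by (rule lipschitz_on_subset[OF reduced_map_lipschitz_near_zero])
      (use p1 in \<open>auto simp: cball_eq_atLeastAtMost\<close>)
  then have attr1: "locally_attracting d ?W (pad_ones d p1)"
    using assms p1 by (intro locally_attracting_pad_ones[where e = "1/200" and L = "9/10"])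
      (auto simp: reduced_map_def)
  have "(3/5)-lipschitz_on (cball p2 (1/100)) reduced_map"
    by (rule lipschitz_on_subset[OF reduced_map_lipschitz_far])
      (use p2 in \<open>auto simp: cball_eq_atLeastAtMost\<close>)
  then have attr2: "locally_attracting d ?W (pad_ones d p2)"
    using assms p2 by (intro locally_attracting_pad_ones[where e = "1/100" and L = "3/5"])
      (auto simp: reduced_map_def)
  have "p1 \<noteq> p2"
    using p1 p2 by auto
  moreover have "fW d ?W (pad_ones d p) = pad_ones d p" if "reduced_map p = p" for p
    using fW_first_row_pad_ones[OF assms] that by (simp add: reduced_map_def)
  ultimately show ?thesis
    using assms attr1 attr2 p1 p2 unfolding locally_attracting_def
    by (intro exI[of _ ?W] conjI allI exI[of _ "pad_ones d p1"] exI[of _ "pad_ones d p2"])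
       (auto simp: first_row_matrix_in_rvec pad_ones_in_rvec pad_ones_inject)
qed

end
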